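(* A circular net $f:\mathbb Z^m\to\mathbb R^N$ (in general position) is discrete isothermic if and only if there exists a real-valued edge labelling $(\alpha_1,\dots,\alpha_m)$ of $\mathbb Z^m$ such that for every $u$ and $i\ne j$, $$q(f,f_i,f_{ij},f_j)=\frac{\alpha_i}{\alpha_j}.$$
   Context: Notation: for $f:\mathbb Z^m\to\mathbb R^N$, $f=f(u)$, $f_i=f(u+e_i)$, $f_{ij}=f(u+e_i+e_j)$ with $e_i$ the unit vectors. A Q-net is a map such that each elementary quadrilateral $(f,f_i,f_{ij},f_j)$ ($i\ne j$) is planar, assumed non-degenerate (distinct vertices, no three collinear, diagonals meeting in a point distinct from the vertices). Two planar quadrilaterals $(A,B,C,D)$, $(A^*,B^*,C^*,D^* )$ are dual if $A^*B^*\parallel AB$, $B^*C^*\parallel BC$, $C^*D^*\parallel CD$, $D^*A^*\parallel DA$, $A^*C^*\parallel BD$, $B^*D^*\parallel AC$. A Q-net $f$ is a discrete Koenigs net if there is a Q-net $f^*$ with every $(f^*,f^*_i,f^*_{ij},f^*_j)$ dual to $(f,f_i,f_{ij},f_j)$. A circular net is a Q-net all of whose elementary quadrilaterals have their four vertices on a circle. A discrete isothermic net is a circular net which is a discrete Koenigs net. For four concircular points $a,b,c,d\in\mathbb R^N$, their cross-ratio is $q(a,b,c,d)=(a-b)(b-c)^{-1}(c-d)(d-a)^{-1}$, computed after identifying a $2$-plane containing them with $\mathbb C$; it is real. An edge labelling is a system of real functions $\alpha_i$ ($i=1,\dots,m$) on the edges of $\mathbb Z^m$ parallel to the $i$-th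 axis, taking equal values on opposite edges of every elementary square; equivalently, $\alpha_i(u)$ (the value on the edge $(u,u+e_i)$) depends only on $u_i$. *)

theory Defs
  imports "HOL-Analysis.Analysis"
begin

text \<open>Lattice points of Z^m are functions from a finite index type 'm to int.
  The shift u + e_i:\<close>
definition shift :: "('m \<Rightarrow> int) \<Rightarrow> 'm \<Rightarrow> ('m \<Rightarrow> int)" where
  "shift u i = u(i := u i + 1)"

definition nondeg_planar_quad :: "'a::euclidean_space \<Rightarrow> 'a \<Rightarrow> 'a \<Rightarrow> 'a \<Rightarrow> bool" where
  "nondeg_planar_quad A B C D \<longleftrightarrow>
     aff_dim {A, B, C, D} \<le> 2 \<and>
     distinct [A, B, C, D] \<and>
     \<not> collinear {A, B, C} \<and> \<not> collinear {A, B, D} \<and>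
     \<not> collinear {A, C, D} \<and> \<not> collinear {B, C, D} \<and>
     (\<exists>P. P \<in> affine hull {A, C} \<and> P \<in> affine hull {B, D} \<and> P \<notin> {A, B, C, D})"

definition qnet :: "(('m::finite \<Rightarrow> int) \<Rightarrow> 'a::euclidean_space) \<Rightarrow> bool" where
  "qnet f \<longleftrightarrow> (\<forall>u i j. i \<noteq> j \<longrightarrow>
      nondeg_planar_quad (f u) (f (shift u i)) (f (shift (shift u i) j)) (f (shift u j)))"

definition parallel_vec :: "'a::real_vector \<Rightarrow> 'a \<Rightarrow> bool" where
  "parallel_vec x y \<longleftrightarrow> (\<exists>c. x = c *\<^sub>R y) \<or> (\<exists>c. y = c *\<^sub>R x)"

definition dual_quad :: "'a::real_vector \<Rightarrow> 'a \<Rightarrow> 'a \<Rightarrow> 'a \<Rightarrow> 'a \<Rightarrow> 'a \<Rightarrow> 'a \<Rightarrow> 'a \<Rightarrow> bool" where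
  "dual_quad A B C D A' B' C' D' \<longleftrightarrow>
     parallel_vec (B' - A') (B - A) \<and> parallel_vec (C' - B') (C - B) \<and>
     parallel_vec (D' - C') (D - C) \<and> parallel_vec (A' - D') (A - D) \<and>
     parallel_vec (C' - A') (D - B) \<and> parallel_vec (D' - B') (C - A)"

definition koenigs_net :: "(('m::finite \<Rightarrow> int) \<Rightarrow> 'a::euclidean_space) \<Rightarrow> bool" where
  "koenigs_net f \<longleftrightarrow> qnet f \<and>
     (\<exists>g :: ('m \<Rightarrow> int) \<Rightarrow> 'a. qnet g \<and>
        (\<forall>u i j. i \<noteq> j \<longrightarrow>
           dual_quad (f u) (f (shift u i)) (f (shift (shift u i) j)) (f (shift u j))
                     (g u) (g (shift u i)) (g (shift (shift u i) j)) (g (shift u j))))"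

text \<open>Four points lie on a circle: they lie on a sphere whose centre is in their affine hull
  (together with planarity of the quadrilateral this is the usual notion).\<close>
definition concircular :: "'a::euclidean_space \<Rightarrow> 'a \<Rightarrow> 'a \<Rightarrow> 'a \<Rightarrow> bool" where
  "concircular a b c d \<longleftrightarrow> aff_dim {a, b, c, d} \<le> 2 \<and>
     (\<exists>z \<in> affine hull {a, b, c, d}. dist z a = dist z b \<and> dist z a = dist z c \<and> dist z a = dist z d)"

definition circular_net :: "(('m::finite \<Rightarrow> int) \<Rightarrow> 'a::euclidean_space) \<Rightarrow> bool" where
  "circular_net f \<longleftrightarrow> qnet f \<and> (\<forall>u i j. i \<noteq> j \<longrightarrow>
      concircular (f u) (f (shift u i)) (f (shift (shift u i) j)) (f (shift u j)))"

definition isothermic_net :: "(('m::finite \<Rightarrow> int) \<Rightarrow> 'a::euclidean_space) \<Rightarrow> bool" where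
  "isothermic_net f \<longleftrightarrow> circular_net f \<and> koenigs_net f"

text \<open>Cross-ratio q(a,b,c,d) = (a-b)(b-c)^{-1}(c-d)(d-a)^{-1}, computed after identifying
  a 2-plane containing the points with C via an isometric embedding of C.\<close>
definition cross_ratio :: "'a::euclidean_space \<Rightarrow> 'a \<Rightarrow> 'a \<Rightarrow> 'a \<Rightarrow> real" where
  "cross_ratio a b c d = (THE q :: real. \<exists>(\<phi> :: complex \<Rightarrow> 'a) z1 z2 z3 z4.
      (\<forall>z w. dist (\<phi> z) (\<phi> w) = dist z w) \<and>
      \<phi> z1 = a \<and> \<phi> z2 = b \<and> \<phi> z3 = c \<and> \<phi> z4 = d \<and>
      (z1 - z2) * inverse (z2 - z3) * (z3 - z4) * inverse (z4 - z1) = complex_of_real q)"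

end

theory Submission
  imports Defs
begin

text \<open>
  Everything happens in one elementary quadrilateral (A, B, C, D), which is planar and
  concircular, so it is the image of a complex quadrilateral (0, b, c, d) under an isometric
  linear embedding of the complex plane; there its cross-ratio q is real.  For real alpha, beta
  with alpha = q beta, the "dual edges" alpha / conj (b - a) etc. close up to a dual
  quadrilateral (an identity between rational functions), which is non-degenerate; conversely
  every dual quadrilateral has this form, so its opposite edges satisfy
  <g_1 - g_0, b - a> = <g_2 - g_3, c - d>, and q is the quotient of the two edge quantities.

  On the lattice this yields both directions: given a dual net g, the quantities
  <g(u + e_i) - g(u), f(u + e_i) - f(u)> are an edge labelling realising the cross-ratios;
  given a labelling, the prescribed dual edges form a closed discrete 1-form, which
  integrates to a dual net g.
\<close>

section \<open>Cross-ratios and quadrilaterals in the complex plane\<close>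

definition cross_ratio_cplx :: "complex \<Rightarrow> complex \<Rightarrow> complex \<Rightarrow> complex \<Rightarrow> complex" where
  "cross_ratio_cplx a b c d = (a - b) * inverse (b - c) * (c - d) * inverse (d - a)"

lemma Im_mult_cnj_eq_0_iff:
  "Im (x * cnj y) = 0 \<longleftrightarrow> x = 0 \<or> y = 0 \<or> (\<exists>c::real. y = c *\<^sub>R x)"
proof
  assume h: "Im (x * cnj y) = 0"
  show "x = 0 \<or> y = 0 \<or> (\<exists>c::real. y = c *\<^sub>R x)"
  proof (cases "x = 0")
    case False
    then have n: "Re x ^ 2 + Im x ^ 2 \<noteq> 0"
      by (simp add: complex_eq_iff)
    define c where "c = (Re y * Re x + Im y * Im x) / (Re x ^ 2 + Im x ^ 2)"
    have "y = c *\<^sub>R x"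
      using h n unfolding c_def by (simp add: complex_eq_iff field_simps power2_eq_square)
    then show ?thesis by blast
  qed simp
qed (auto simp: scaleR_conv_of_real)

lemma collinear_complex_iff: "collinear {x, y, z::complex} \<longleftrightarrow> Im ((y - x) * cnj (z - x)) = 0"
proof -
  have "collinear {x, y, z} = collinear {y, x, z}" by (simp add: insert_commute)
  also have "\<dots> = collinear {0, y - x, z - x}" by (rule collinear_3) simp
  also have "\<dots> \<longleftrightarrow> Im ((y - x) * cnj (z - x)) = 0"
    unfolding collinear_lemma Im_mult_cnj_eq_0_iff by simp
  finally show ?thesis .
qed

lemma Im_scaleR_mult_cnj: "Im ((r *\<^sub>R x) * cnj (s *\<^sub>R y)) = r * s * Im (x * cnj y)"
  by (simp add: scaleR_conv_of_real algebra_simps)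

lemma complex_independent_coeffs:
  fixes x y :: complex
  assumes "Im (x * cnj y) \<noteq> 0" and "s *\<^sub>R x = t *\<^sub>R y"
  shows "s = 0 \<and> t = 0"
proof -
  have "s * Im (x * cnj y) = Im ((t *\<^sub>R y) * cnj (1 *\<^sub>R y))"
    using Im_scaleR_mult_cnj[of s x 1 y] assms(2) by simp
  also have "\<dots> = 0" by (simp add: scaleR_conv_of_real)
  finally have "s = 0" using assms(1) by simp
  moreover have "y \<noteq> 0" using assms(1) by auto
  ultimately show ?thesis using assms(2) by simp
qed

lemma complex_span_pair:
  fixes x y z :: complex
  assumes "Im (x * cnj y) \<noteq> 0"
  obtains s t where "z = s *\<^sub>R x + t *\<^sub>R y"
proof
  define D where "D = Im (x * cnj y)"
  have "D *\<^sub>R z = Im (z * cnj y) *\<^sub>R x + Im (x * cnj z) *\<^sub>R y"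
    unfolding D_def by (simp add: complex_eq_iff algebra_simps)
  then show "z = (Im (z * cnj y) / D) *\<^sub>R x + (Im (x * cnj z) / D) *\<^sub>R y"
    using assms unfolding D_def[symmetric]
    by (metis (no_types, lifting) scaleR_add_right scaleR_scaleR divide_inverse_commute
        right_inverse scaleR_one mult.commute)
qed

lemma collinear_on_line:
  fixes x y z :: "'a::real_vector"
  assumes "x = y + t *\<^sub>R (z - y)"
  shows "collinear {x, y, z}"
proof -
  have "x = (1 - t) *\<^sub>R y + (1 - (1 - t)) *\<^sub>R z" using assms by (simp add: algebra_simps)
  then have "collinear {y, x, z}" unfolding collinear_3_expand by blast
  then show ?thesis by (simp add: insert_commute)
qed

lemma cross_ratio_cplx_nonzero: "distinct [a, b, c, d] \<Longrightarrow> cross_ratio_cplx a b c d \<noteq> 0"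
  unfolding cross_ratio_cplx_def by auto

text \<open>A cross-ratio equal to 1 would force a = c or b = d.\<close>

lemma cross_ratio_cplx_ne_1:
  assumes "distinct [a, b, c, d]"
  shows "cross_ratio_cplx a b c d \<noteq> 1"
proof
  assume h: "cross_ratio_cplx a b c d = 1"
  have "b - c \<noteq> 0" "d - a \<noteq> 0" using assms by auto
  then have "(a - b) * (c - d) = (b - c) * (d - a)"
    using h unfolding cross_ratio_cplx_def by (simp add: field_simps)
  moreover have "(a - b) * (c - d) - (b - c) * (d - a) = (a - c) * (b - d)"
    by (simp add: algebra_simps)
  ultimately have "(a - c) * (b - d) = 0" by simp
  then show False using assms by auto
qed

lemma cross_ratio_cplx_translate:
  "cross_ratio_cplx (a - z) (b - z) (c - z) (d - z) = cross_ratio_cplx a b c d"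
  unfolding cross_ratio_cplx_def by simp

lemma cnj_cross_ratio_cplx:
  "cnj (cross_ratio_cplx a b c d) = cross_ratio_cplx (cnj a) (cnj b) (cnj c) (cnj d)"
  unfolding cross_ratio_cplx_def by simp

lemma cross_ratio_cplx_inversion:
  assumes "R \<noteq> 0" and "distinct [a, b, c, d]" and "0 \<notin> {a, b, c, d}"
  shows "cross_ratio_cplx (R / a) (R / b) (R / c) (R / d) = cross_ratio_cplx a b c d"
proof -
  have ne: "a \<noteq> 0" "b \<noteq> 0" "c \<noteq> 0" "d \<noteq> 0" "c - b \<noteq> 0" "a - d \<noteq> 0"
    using assms by auto
  have inv_diff: "R / p - R / q = R * (q - p) / (p * q)" if "p \<noteq> 0" "q \<noteq> 0" for p q
    using that by (simp add: field_simps)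
  have "cross_ratio_cplx (R / a) (R / b) (R / c) (R / d)
      = (R * (b - a) / (a * b)) * inverse (R * (c - b) / (b * c))
        * (R * (d - c) / (c * d)) * inverse (R * (a - d) / (d * a))"
    unfolding cross_ratio_cplx_def using ne by (simp add: inv_diff)
  also have "\<dots> = ((b - a) * (d - c)) / ((c - b) * (a - d))"
    using ne assms(1) by (simp add: inverse_divide)
  also have "\<dots> = cross_ratio_cplx a b c d"
    unfolding cross_ratio_cplx_def by (simp add: field_simps)
  finally show ?thesis .
qed

text \<open>Four concyclic points have a real cross-ratio: on the circle of radius r about z,
  complex conjugation acts like the inversion p - z |-> r^2 / (p - z).\<close>

lemma cross_ratio_cplx_real_on_circle:
  assumes "cmod (a - z) = r" "cmod (b - z) = r" "cmod (c - z) = r" "cmod (d - z) = r"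
    and "distinct [a, b, c, d]"
  shows "cross_ratio_cplx a b c d = of_real (Re (cross_ratio_cplx a b c d))"
proof -
  define R where "R = complex_of_real (r ^ 2)"
  have "r \<noteq> 0" using assms by auto
  then have "R \<noteq> 0" unfolding R_def by simp
  have cnj_on_circle: "cnj (p - z) = R / (p - z)" if "cmod (p - z) = r" for p
  proof -
    have "R = (p - z) * cnj (p - z)" unfolding R_def using complex_norm_square[of "p - z"] that by simp
    moreover have "p - z \<noteq> 0" using that \<open>r \<noteq> 0\<close> by auto
    ultimately show ?thesis by (simp add: field_simps)
  qed
  have "cnj (cross_ratio_cplx a b c d) = cnj (cross_ratio_cplx (a - z) (b - z) (c - z) (d - z))"
    by (simp only: cross_ratio_cplx_translate)
  also have "\<dots> = cross_ratio_cplx (R / (a - z)) (R / (b - z)) (R / (c - z)) (R / (d - z))"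
    unfolding cnj_cross_ratio_cplx cnj_on_circle[OF assms(1)] cnj_on_circle[OF assms(2)]
      cnj_on_circle[OF assms(3)] cnj_on_circle[OF assms(4)] ..
  also have "\<dots> = cross_ratio_cplx (a - z) (b - z) (c - z) (d - z)"
    using \<open>R \<noteq> 0\<close> assms by (intro cross_ratio_cplx_inversion) auto
  also have "\<dots> = cross_ratio_cplx a b c d" by (rule cross_ratio_cplx_translate)
  finally show ?thesis by (simp add: complex_eq_iff)
qed

lemma concircular_cross_ratio_cplx_real:
  fixes a b c d :: complex
  assumes "concircular a b c d" and "distinct [a, b, c, d]"
  shows "cross_ratio_cplx a b c d = of_real (Re (cross_ratio_cplx a b c d))"
proof -
  from assms(1) obtain z where "dist z a = dist z b" "dist z a = dist z c" "dist z a = dist z d"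
    unfolding concircular_def by blast
  then have "cmod (p - z) = dist z a" if "p \<in> {a, b, c, d}" for p
    using that by (auto simp: dist_norm norm_minus_commute)
  then show ?thesis by (intro cross_ratio_cplx_real_on_circle[where z = z] assms(2)) simp_all
qed

lemma complex_diagonals_not_parallel:
  fixes z0 z1 z2 z3 P :: complex
  assumes P: "P \<in> affine hull {z0, z2}" "P \<in> affine hull {z1, z3}"
    and nc: "\<not> collinear {z0, z1, z2}" and "z1 \<noteq> z3"
  shows "Im ((z2 - z0) * cnj (z3 - z1)) \<noteq> 0"
proof
  assume "Im ((z2 - z0) * cnj (z3 - z1)) = 0"
  moreover have "z2 - z0 \<noteq> 0"
  proof
    assume "z2 - z0 = 0"
    then have "{z0, z1, z2} = {z0, z1}" by auto
    then show False using nc by (simp add: collinear_2)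
  qed
  ultimately have "\<exists>k. z3 - z1 = k *\<^sub>R (z2 - z0)"
    using Im_mult_cnj_eq_0_iff[of "z2 - z0" "z3 - z1"] \<open>z1 \<noteq> z3\<close> by simp
  then obtain k where k: "z3 - z1 = k *\<^sub>R (z2 - z0)" ..
  obtain v where v: "P = z0 + v *\<^sub>R (z2 - z0)" using P(1) unfolding affine_hull_2_alt by (rule rangeE)
  obtain w where w: "P = z1 + w *\<^sub>R (z3 - z1)" using P(2) unfolding affine_hull_2_alt by (rule rangeE)
  have "z0 + v *\<^sub>R (z2 - z0) = z1 + (w * k) *\<^sub>R (z2 - z0)" using v w k by simp
  then have "z1 = z0 + (v - w * k) *\<^sub>R (z2 - z0)" by (simp add: algebra_simps)
  then have "collinear {z1, z0, z2}" by (rule collinear_on_line)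
  then show False using nc by (simp add: insert_commute)
qed

lemma complex_diagonal_point:
  fixes z0 z1 z2 z3 :: complex
  assumes n1: "\<not> collinear {z0, z1, z2}" and n2: "\<not> collinear {z0, z1, z3}"
    and n3: "\<not> collinear {z0, z2, z3}" and n4: "\<not> collinear {z1, z2, z3}"
    and dg: "Im ((z2 - z0) * cnj (z3 - z1)) \<noteq> 0"
  shows "\<exists>P. P \<in> affine hull {z0, z2} \<and> P \<in> affine hull {z1, z3} \<and> P \<notin> {z0, z1, z2, z3}"
proof -
  obtain u v where uv: "z1 - z0 = u *\<^sub>R (z2 - z0) + v *\<^sub>R (z3 - z1)"
    using complex_span_pair[OF dg] .
  define P where "P = z0 + u *\<^sub>R (z2 - z0)"
  have P': "P = z1 + (- v) *\<^sub>R (z3 - z1)" unfolding P_def using uv by (simp add: algebra_simps)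
  have "P \<in> affine hull {z0, z2}" unfolding affine_hull_2_alt P_def by (rule rangeI)
  moreover have "P \<in> affine hull {z1, z3}" unfolding affine_hull_2_alt P' by (rule rangeI)
  moreover have "P \<noteq> z0"
  proof
    assume "P = z0"
    with P' have "z0 = z1 + (- v) *\<^sub>R (z3 - z1)" by simp
    then have "collinear {z0, z1, z3}" by (rule collinear_on_line)
    then show False using n2 by simp
  qed
  moreover have "P \<noteq> z1"
  proof
    assume "P = z1"
    with P_def have "z1 = z0 + u *\<^sub>R (z2 - z0)" by simp
    then have "collinear {z1, z0, z2}" by (rule collinear_on_line)
    then show False using n1 by (simp add: insert_commute)
  qed
  moreover have "P \<noteq> z2"
  proof
    assume "P = z2"
    with P' have "z2 = z1 + (- v) *\<^sub>R (z3 - z1)" by simp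
    then have "collinear {z2, z1, z3}" by (rule collinear_on_line)
    then show False using n4 by (simp add: insert_commute)
  qed
  moreover have "P \<noteq> z3"
  proof
    assume "P = z3"
    with P_def have "z3 = z0 + u *\<^sub>R (z2 - z0)" by simp
    then have "collinear {z3, z0, z2}" by (rule collinear_on_line)
    then show False using n3 by (simp add: insert_commute)
  qed
  ultimately show ?thesis by blast
qed

lemma nondeg_planar_quad_complex_iff:
  fixes z0 z1 z2 z3 :: complex
  shows "nondeg_planar_quad z0 z1 z2 z3 \<longleftrightarrow>
    \<not> collinear {z0, z1, z2} \<and> \<not> collinear {z0, z1, z3} \<and> \<not> collinear {z0, z2, z3} \<and>
    \<not> collinear {z1, z2, z3} \<and> Im ((z2 - z0) * cnj (z3 - z1)) \<noteq> 0"
proof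
  assume nd: "nondeg_planar_quad z0 z1 z2 z3"
  then obtain P where "P \<in> affine hull {z0, z2}" "P \<in> affine hull {z1, z3}"
    unfolding nondeg_planar_quad_def by blast
  with nd show "\<not> collinear {z0, z1, z2} \<and> \<not> collinear {z0, z1, z3} \<and> \<not> collinear {z0, z2, z3} \<and>
    \<not> collinear {z1, z2, z3} \<and> Im ((z2 - z0) * cnj (z3 - z1)) \<noteq> 0"
    using complex_diagonals_not_parallel unfolding nondeg_planar_quad_def by auto
next
  assume h: "\<not> collinear {z0, z1, z2} \<and> \<not> collinear {z0, z1, z3} \<and> \<not> collinear {z0, z2, z3} \<and>
    \<not> collinear {z1, z2, z3} \<and> Im ((z2 - z0) * cnj (z3 - z1)) \<noteq> 0"
  have "aff_dim {z0, z1, z2, z3} \<le> 2" using aff_dim_le_DIM[of "{z0, z1, z2, z3}"] by simp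
  moreover have "distinct [z0, z1, z2, z3]" using h by (auto simp: collinear_2 insert_commute)
  ultimately show "nondeg_planar_quad z0 z1 z2 z3"
    using complex_diagonal_point h unfolding nondeg_planar_quad_def by blast
qed

section \<open>Dual quadrilaterals in the complex plane\<close>

text \<open>The dual edge of weight r to the edge from x to y; in the complex plane it equals r /
  cnj (y - x).\<close>

definition dual_edge :: "real \<Rightarrow> 'a::real_normed_vector \<Rightarrow> 'a \<Rightarrow> 'a" where
  "dual_edge r x y = (r / (norm (y - x))\<^sup>2) *\<^sub>R (y - x)"

text \<open>The complex form of a dual edge, which turns the dual-quadrilateral conditions into
  rational identities.\<close>

lemma cnj_dual_edge:
  fixes x y :: complex
  assumes "x \<noteq> y"
  shows "cnj (dual_edge r x y) = of_real r / (y - x)"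
proof -
  have "(r / (cmod w)\<^sup>2) *\<^sub>R w = of_real r / cnj w" if "w \<noteq> 0" for w :: complex
  proof -
    have "of_real ((cmod w)\<^sup>2) = w * cnj w" by (rule complex_norm_square)
    then show ?thesis using that unfolding scaleR_conv_of_real by (simp add: field_simps)
  qed
  then have "dual_edge r x y = of_real r / cnj (y - x)"
    using assms unfolding dual_edge_def by simp
  then show ?thesis by simp
qed

lemma dual_edge_swap: "dual_edge r y x = - dual_edge r x y"
  unfolding dual_edge_def norm_minus_commute[of y x] scaleR_minus_right[symmetric] minus_diff_eq ..

lemma dual_edges_close:
  fixes a b c d :: complex and \<alpha> \<beta> q :: real
  assumes ds: "distinct [a, b, c, d]" and hq: "cross_ratio_cplx a b c d = of_real q"
    and ab: "\<alpha> = q * \<beta>"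
  shows "dual_edge \<alpha> a b + dual_edge \<beta> b c = dual_edge \<beta> a d + dual_edge \<alpha> d c"
    and "dual_edge \<alpha> a b + dual_edge \<beta> b c = dual_edge (\<beta> * (1 - q)) b d"
    and "dual_edge \<beta> a d - dual_edge \<alpha> a b = dual_edge (\<beta> * (1 - q)) a c"
proof -
  define p r s t u v where "p = b - a" and "r = c - b" and "s = d - c" and "t = d - a"
    and "u = c - a" and "v = d - b"
  have nz: "p \<noteq> 0" "r \<noteq> 0" "s \<noteq> 0" "t \<noteq> 0" "u \<noteq> 0" "v \<noteq> 0"
    using ds unfolding p_def r_def s_def t_def u_def v_def by auto
  have t: "t = p + r + s" and u: "u = p + r" and v: "v = r + s"
    unfolding p_def r_def s_def t_def u_def v_def by simp_all
  define Q B where "Q = complex_of_real q" and "B = complex_of_real \<beta>"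
  have "Q = (-p) * inverse (-r) * (-s) * inverse t"
    using hq unfolding Q_def cross_ratio_cplx_def p_def r_def s_def t_def by (simp add: minus_diff_eq)
  also have "\<dots> = - (p * s) / (r * t)" using nz by (simp add: field_simps)
  finally have Q: "Q = - (p * s) / (r * t)" .
  have A: "complex_of_real \<alpha> = Q * B" and C: "complex_of_real (\<beta> * (1 - q)) = B * (1 - Q)"
    unfolding Q_def B_def ab by simp_all
  (* After conjugation, by cnj_dual_edge each claim becomes a rational identity in p, r, s. *)
  have ne: "a \<noteq> b" "b \<noteq> c" "a \<noteq> d" "d \<noteq> c" "b \<noteq> d" "a \<noteq> c" using ds by auto
  have cd: "c - d = - s" unfolding s_def by simp
  have "Q * B / p + B / r = B / t + Q * B / (- s)"
    using nz(1-4) unfolding Q by (simp add: field_simps) (simp add: t algebra_simps)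
  then show "dual_edge \<alpha> a b + dual_edge \<beta> b c = dual_edge \<beta> a d + dual_edge \<alpha> d c"
    unfolding complex_cnj_cancel_iff[symmetric, of "dual_edge \<alpha> a b + dual_edge \<beta> b c"]
      complex_cnj_add cnj_dual_edge[OF ne(1)] cnj_dual_edge[OF ne(2)] cnj_dual_edge[OF ne(3)]
      cnj_dual_edge[OF ne(4)]
      A B_def[symmetric] p_def[symmetric] r_def[symmetric] t_def[symmetric] cd by simp
  have "Q * B / p + B / r = B * (1 - Q) / v"
    using nz(1-4,6) unfolding Q by (simp add: field_simps) (simp add: t v algebra_simps)
  then show "dual_edge \<alpha> a b + dual_edge \<beta> b c = dual_edge (\<beta> * (1 - q)) b d"
    unfolding complex_cnj_cancel_iff[symmetric, of "dual_edge \<alpha> a b + dual_edge \<beta> b c"]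
      complex_cnj_add cnj_dual_edge[OF ne(1)] cnj_dual_edge[OF ne(2)] cnj_dual_edge[OF ne(5)]
      A C B_def[symmetric] p_def[symmetric] r_def[symmetric] v_def[symmetric] by simp
  have "B / t - Q * B / p = B * (1 - Q) / u"
    using nz(1-5) unfolding Q by (simp add: field_simps) (simp add: t u algebra_simps)
  then show "dual_edge \<beta> a d - dual_edge \<alpha> a b = dual_edge (\<beta> * (1 - q)) a c"
    unfolding complex_cnj_cancel_iff[symmetric, of "dual_edge \<beta> a d - dual_edge \<alpha> a b"]
      complex_cnj_diff cnj_dual_edge[OF ne(1)] cnj_dual_edge[OF ne(3)] cnj_dual_edge[OF ne(6)]
      A C B_def[symmetric] p_def[symmetric] t_def[symmetric] u_def[symmetric] by simp
qed

text \<open>Uniqueness: any quadrilateral whose edges and diagonals are parallel to those of (a, b,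
  c, d) has the edges of the construction above; in particular the products of the edge coefficients
  with the squared edge lengths agree on opposite edges, and their quotient is the
  cross-ratio.\<close>

lemma dual_coefficients_determined:
  fixes a b c d :: complex and l1 l2 l3 l4 m n q :: real
  assumes ds: "distinct [a, b, c, d]" and hq: "cross_ratio_cplx a b c d = of_real q"
    and nc1: "\<not> collinear {b, c, d}" and nc2: "\<not> collinear {a, c, d}"
    and E1: "l1 *\<^sub>R (b - a) + l2 *\<^sub>R (c - b) = l4 *\<^sub>R (d - a) + l3 *\<^sub>R (c - d)"
    and E2: "l1 *\<^sub>R (b - a) + l2 *\<^sub>R (c - b) = m *\<^sub>R (d - b)"
    and E3: "l4 *\<^sub>R (d - a) - l1 *\<^sub>R (b - a) = n *\<^sub>R (c - a)"
    and l1: "l1 \<noteq> 0"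
  shows "l3 * (cmod (c - d))\<^sup>2 = l1 * (cmod (b - a))\<^sup>2"
    and "l2 * (cmod (c - b))\<^sup>2 = l4 * (cmod (d - a))\<^sup>2"
    and "q * (l4 * (cmod (d - a))\<^sup>2) = l1 * (cmod (b - a))\<^sup>2"
proof -
  have nz: "b - a \<noteq> 0" "c - b \<noteq> 0" "d - a \<noteq> 0" "c - d \<noteq> 0" using ds by auto
  have q0: "q \<noteq> 0" using cross_ratio_cplx_nonzero[OF ds] hq by auto
  define \<alpha> \<beta> where "\<alpha> = l1 * (cmod (b - a))\<^sup>2" and "\<beta> = \<alpha> / q"
  have ab: "\<alpha> = q * \<beta>" unfolding \<beta>_def using q0 by simp
  (* The dual edges with the same first edge solve the same system with these coefficients: *)
  define l2' l3' l4' m' n' where "l2' = \<beta> / (cmod (c - b))\<^sup>2" and "l3' = \<alpha> / (cmod (c - d))\<^sup>2"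
    and "l4' = \<beta> / (cmod (d - a))\<^sup>2" and "m' = \<beta> * (1 - q) / (cmod (d - b))\<^sup>2"
    and "n' = \<beta> * (1 - q) / (cmod (c - a))\<^sup>2"
  have e1: "dual_edge \<alpha> a b = l1 *\<^sub>R (b - a)" unfolding dual_edge_def \<alpha>_def using nz by simp
  have E': "l1 *\<^sub>R (b - a) + l2' *\<^sub>R (c - b) = l4' *\<^sub>R (d - a) + l3' *\<^sub>R (c - d)"
      "l1 *\<^sub>R (b - a) + l2' *\<^sub>R (c - b) = m' *\<^sub>R (d - b)"
      "l4' *\<^sub>R (d - a) - l1 *\<^sub>R (b - a) = n' *\<^sub>R (c - a)"
    using dual_edges_close[OF ds hq ab] unfolding e1
    unfolding dual_edge_def l2'_def l3'_def l4'_def m'_def n'_def by simp_all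
  (* Since the diagonals are not parallel, the two solutions coincide. *)
  have "l2 *\<^sub>R (c - b) = m *\<^sub>R (d - b) - l1 *\<^sub>R (b - a)"
    and "l2' *\<^sub>R (c - b) = m' *\<^sub>R (d - b) - l1 *\<^sub>R (b - a)"
    using E2 E'(2) by (metis add_diff_cancel_left')+
  then have "(l2 - l2') *\<^sub>R (c - b) = (m - m') *\<^sub>R (d - b)"
    by (simp add: scaleR_diff_left)
  moreover have "Im ((c - b) * cnj (d - b)) \<noteq> 0" using nc1 by (simp add: collinear_complex_iff)
  ultimately have L2: "l2 = l2'" using complex_independent_coeffs by fastforce
  have "l4 *\<^sub>R (d - a) = n *\<^sub>R (c - a) + l1 *\<^sub>R (b - a)"
    and "l4' *\<^sub>R (d - a) = n' *\<^sub>R (c - a) + l1 *\<^sub>R (b - a)"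
    using E3 E'(3) by (metis diff_eq_eq)+
  then have "(l4 - l4') *\<^sub>R (d - a) = (n - n') *\<^sub>R (c - a)"
    by (simp add: scaleR_diff_left)
  moreover have "Im ((d - a) * cnj (c - a)) \<noteq> 0"
    using nc2 collinear_complex_iff[of a d c] by (simp add: insert_commute)
  ultimately have L4: "l4 = l4'" using complex_independent_coeffs by fastforce
  have "l3 *\<^sub>R (c - d) = l3' *\<^sub>R (c - d)"
    using E1 E'(1) unfolding L2 L4 by (metis add_left_cancel)
  then have L3: "l3 = l3'" using nz by simp
  show "l3 * (cmod (c - d))\<^sup>2 = l1 * (cmod (b - a))\<^sup>2"
    unfolding L3 l3'_def \<alpha>_def using nz by simp
  show "l2 * (cmod (c - b))\<^sup>2 = l4 * (cmod (d - a))\<^sup>2"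
    unfolding L2 L4 l2'_def l4'_def using nz by simp
  show "q * (l4 * (cmod (d - a))\<^sup>2) = l1 * (cmod (b - a))\<^sup>2"
    unfolding L4 l4'_def using nz ab by (simp add: \<alpha>_def)
qed

lemma parallel_vec_coeff:
  assumes "parallel_vec x y" and "y \<noteq> 0"
  obtains l where "x = l *\<^sub>R y"
proof -
  from assms(1) consider c where "x = c *\<^sub>R y" | c where "y = c *\<^sub>R x"
    unfolding parallel_vec_def by blast
  then show ?thesis
  proof cases
    case (2 c)
    then have "x = (1 / c) *\<^sub>R y" using assms(2) by auto
    then show ?thesis by (rule that)
  qed (rule that)
qed

lemma dual_quad_complex_invariants:
  fixes a b c d g0 g1 g2 g3 :: complex
  assumes nd: "nondeg_planar_quad a b c d" and hq: "cross_ratio_cplx a b c d = of_real q"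
    and du: "dual_quad a b c d g0 g1 g2 g3" and g01: "g0 \<noteq> g1"
  shows "inner (g1 - g0) (b - a) = inner (g2 - g3) (c - d)"
    and "inner (g2 - g1) (c - b) = inner (g3 - g0) (d - a)"
    and "q = inner (g1 - g0) (b - a) / inner (g3 - g0) (d - a)"
proof -
  have ds: "distinct [a, b, c, d]" and nc: "\<not> collinear {b, c, d}" "\<not> collinear {a, c, d}"
    using nd unfolding nondeg_planar_quad_def by simp_all
  then have nz: "b - a \<noteq> 0" "c - b \<noteq> 0" "d - c \<noteq> 0" "a - d \<noteq> 0" "d - b \<noteq> 0" "c - a \<noteq> 0"
    by auto
  from du obtain l1 l2 k3 k4 m n where g1: "g1 - g0 = l1 *\<^sub>R (b - a)"
    and g2: "g2 - g1 = l2 *\<^sub>R (c - b)" and k3: "g3 - g2 = k3 *\<^sub>R (d - c)"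
    and k4: "g0 - g3 = k4 *\<^sub>R (a - d)" and g5: "g2 - g0 = m *\<^sub>R (d - b)"
    and g6: "g3 - g1 = n *\<^sub>R (c - a)"
    unfolding dual_quad_def using nz by (metis parallel_vec_coeff)
  have g3: "g2 - g3 = k3 *\<^sub>R (c - d)" using k3 by (metis minus_diff_eq scaleR_minus_right)
  have g4: "g3 - g0 = k4 *\<^sub>R (d - a)" using k4 by (metis minus_diff_eq scaleR_minus_right)
  have "l1 \<noteq> 0" using g1 g01 by auto
  have G1: "g1 = g0 + l1 *\<^sub>R (b - a)" and G2: "g2 = g1 + l2 *\<^sub>R (c - b)"
    and G4: "g3 = g0 + k4 *\<^sub>R (d - a)"
    using g1 g2 g4 by (metis add.commute diff_add_cancel)+
  have "l1 *\<^sub>R (b - a) + l2 *\<^sub>R (c - b) = k4 *\<^sub>R (d - a) + k3 *\<^sub>R (c - d)"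
      "l1 *\<^sub>R (b - a) + l2 *\<^sub>R (c - b) = m *\<^sub>R (d - b)"
      "k4 *\<^sub>R (d - a) - l1 *\<^sub>R (b - a) = n *\<^sub>R (c - a)"
    using g3 g5 g6 unfolding G2 G1 G4 by (simp_all add: algebra_simps)
  note coeffs = dual_coefficients_determined[OF ds hq nc this \<open>l1 \<noteq> 0\<close>]
  have inner_scaled: "inner (k *\<^sub>R z) z = k * (cmod z)\<^sup>2" for k and z :: complex
    by (simp add: power2_norm_eq_inner)
  have i1: "inner (g1 - g0) (b - a) = l1 * (cmod (b - a))\<^sup>2"
    and i2: "inner (g2 - g1) (c - b) = l2 * (cmod (c - b))\<^sup>2"
    and i3: "inner (g2 - g3) (c - d) = k3 * (cmod (c - d))\<^sup>2"
    and i4: "inner (g3 - g0) (d - a) = k4 * (cmod (d - a))\<^sup>2"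
    unfolding g1 g2 g3 g4 inner_scaled by simp_all
  show "inner (g1 - g0) (b - a) = inner (g2 - g3) (c - d)" using coeffs(1) i1 i3 by simp
  show "inner (g2 - g1) (c - b) = inner (g3 - g0) (d - a)" using coeffs(2) i2 i4 by simp
  have "l1 * (cmod (b - a))\<^sup>2 \<noteq> 0" using \<open>l1 \<noteq> 0\<close> nz by simp
  then have "k4 * (cmod (d - a))\<^sup>2 \<noteq> 0" using coeffs(3) by auto
  then show "q = inner (g1 - g0) (b - a) / inner (g3 - g0) (d - a)"
    using coeffs(3) unfolding i1 i4 by (simp add: eq_divide_eq)
qed

lemma dual_quad_complex_construction:
  fixes b c d :: complex and \<alpha> \<beta> :: real
  assumes nd: "nondeg_planar_quad 0 b c d" and hq: "cross_ratio_cplx 0 b c d = of_real (\<alpha> / \<beta>)"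
  shows "dual_edge \<alpha> 0 b + dual_edge \<beta> b c = dual_edge \<beta> 0 d + dual_edge \<alpha> d c"
    and "dual_quad 0 b c d 0 (dual_edge \<alpha> 0 b) (dual_edge \<alpha> 0 b + dual_edge \<beta> b c)
      (dual_edge \<beta> 0 d)"
proof -
  define q where "q = \<alpha> / \<beta>"
  have ds: "distinct [0, b, c, d]" using nd unfolding nondeg_planar_quad_def by simp
  have "q \<noteq> 0" using cross_ratio_cplx_nonzero[OF ds] hq unfolding q_def by auto
  then have ab: "\<alpha> = q * \<beta>" unfolding q_def by auto
  note closes = dual_edges_close[OF ds hq[folded q_def] ab]
  show "dual_edge \<alpha> 0 b + dual_edge \<beta> b c = dual_edge \<beta> 0 d + dual_edge \<alpha> d c"
    by (rule closes(1))
  have par: "parallel_vec (dual_edge r x y) (y - x)" for r and x y :: complex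
    unfolding parallel_vec_def dual_edge_def by blast
  have "dual_edge \<beta> 0 d - (dual_edge \<alpha> 0 b + dual_edge \<beta> b c) = dual_edge \<alpha> c d"
    unfolding closes(1) dual_edge_swap[of \<alpha> c d] by simp
  moreover have "0 - dual_edge \<beta> 0 d = dual_edge \<beta> d 0" by (simp add: dual_edge_swap[of \<beta> d 0])
  ultimately show "dual_quad 0 b c d 0 (dual_edge \<alpha> 0 b) (dual_edge \<alpha> 0 b + dual_edge \<beta> b c)
      (dual_edge \<beta> 0 d)"
    unfolding dual_quad_def using par closes(2,3) by (metis add_diff_cancel_left' diff_zero)
qed

lemma dual_quad_complex_nondeg:
  fixes b c d :: complex and \<alpha> \<beta> :: real
  assumes nd: "nondeg_planar_quad 0 b c d" and hq: "cross_ratio_cplx 0 b c d = of_real (\<alpha> / \<beta>)"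
  shows "nondeg_planar_quad 0 (dual_edge \<alpha> 0 b) (dual_edge \<alpha> 0 b + dual_edge \<beta> b c)
    (dual_edge \<beta> 0 d)"
proof -
  define q where "q = \<alpha> / \<beta>"
  have ds: "distinct [0, b, c, d]" using nd unfolding nondeg_planar_quad_def by simp
  have q0: "q \<noteq> 0" and q1: "q \<noteq> 1"
    using cross_ratio_cplx_nonzero[OF ds] cross_ratio_cplx_ne_1[OF ds] hq unfolding q_def by auto
  then have b0: "\<beta> \<noteq> 0" and ab: "\<alpha> = q * \<beta>" unfolding q_def by auto
  note closes = dual_edges_close[OF ds hq[folded q_def] ab]
  have ibc: "Im (b * cnj c) \<noteq> 0" and ibd: "Im (b * cnj d) \<noteq> 0"
    and dg: "Im ((d - b) * cnj c) \<noteq> 0"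
    using nd unfolding nondeg_planar_quad_complex_iff collinear_complex_iff
    by (simp_all add: algebra_simps)
  have nz: "b \<noteq> 0" "c \<noteq> 0" "d \<noteq> 0" "c - b \<noteq> 0" "d - b \<noteq> 0" using ds by auto
  define r1 r2 r4 r5 r6 where "r1 = \<alpha> / (cmod b)\<^sup>2" and "r2 = \<beta> / (cmod (c - b))\<^sup>2"
    and "r4 = \<beta> / (cmod d)\<^sup>2" and "r5 = \<beta> * (1 - q) / (cmod (d - b))\<^sup>2"
    and "r6 = \<beta> * (1 - q) / (cmod c)\<^sup>2"
  have r: "r1 \<noteq> 0" "r2 \<noteq> 0" "r4 \<noteq> 0" "r5 \<noteq> 0" "r6 \<noteq> 0"
    unfolding r1_def r2_def r4_def r5_def r6_def using nz q0 q1 b0 ab by auto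
  (* All sides and diagonals of the dual quadrilateral are real multiples of those of
    the original one. *)
  define z1 z2 z3 where "z1 = dual_edge \<alpha> 0 b" and "z2 = dual_edge \<alpha> 0 b + dual_edge \<beta> b c"
    and "z3 = dual_edge \<beta> 0 d"
  have e1: "z1 = r1 *\<^sub>R b" unfolding z1_def r1_def dual_edge_def by simp
  have e2: "z2 = r5 *\<^sub>R (d - b)" unfolding z2_def closes(2) unfolding r5_def dual_edge_def ..
  have e3: "z3 = r4 *\<^sub>R d" unfolding z3_def r4_def dual_edge_def by simp
  have e21: "z2 - z1 = r2 *\<^sub>R (c - b)" unfolding z1_def z2_def r2_def dual_edge_def by simp
  have e31: "z3 - z1 = r6 *\<^sub>R c" unfolding z1_def z3_def closes(3) unfolding r6_def dual_edge_def by simp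
  have "\<not> collinear {0, z1, z2}" "\<not> collinear {0, z1, z3}" "\<not> collinear {0, z2, z3}"
    "\<not> collinear {z1, z2, z3}"
    unfolding collinear_complex_iff diff_zero e21 e31 unfolding e1 e2 e3 Im_scaleR_mult_cnj
    using r ibc ibd by (simp_all add: algebra_simps)
  moreover have "Im ((z2 - 0) * cnj (z3 - z1)) \<noteq> 0"
    unfolding diff_zero e2 e31 Im_scaleR_mult_cnj using r dg by simp
  ultimately show ?thesis unfolding nondeg_planar_quad_complex_iff z1_def z2_def z3_def by blast
qed

section \<open>The cross-ratio of points in a Euclidean space\<close>

text \<open>The real part of the complex cross-ratio, expressed through inner products of the
  edges.\<close>

definition cross_ratio_re :: "'a::real_inner \<Rightarrow> 'a \<Rightarrow> 'a \<Rightarrow> 'a \<Rightarrow> real" where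
  "cross_ratio_re a b c d =
    (inner (a - b) (b - c) * inner (c - d) (d - a) - inner (a - b) (c - d) * inner (b - c) (d - a)
      + inner (a - b) (d - a) * inner (c - d) (b - c)) / (inner (b - c) (b - c) * inner (d - a) (d - a))"

lemma inner_diff_by_dists:
  fixes p q r s :: "'a::real_inner"
  shows "inner (p - q) (r - s) = ((dist p s)\<^sup>2 + (dist q r)\<^sup>2 - (dist p r)\<^sup>2 - (dist q s)\<^sup>2) / 2"
  by (simp add: dist_norm power2_norm_eq_inner inner_diff_left inner_diff_right inner_commute
      algebra_simps)

text \<open>Being expressible through distances, it is invariant under isometries.\<close>

lemma cross_ratio_re_isometry:
  assumes "\<And>z w. dist (\<psi> z) (\<psi> w) = dist z w"
  shows "cross_ratio_re (\<psi> a) (\<psi> b) (\<psi> c) (\<psi> d) = cross_ratio_re a b c (d :: 'b::real_inner)"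
  unfolding cross_ratio_re_def inner_diff_by_dists assms ..

lemma Re_cross_ratio_cplx: "Re (cross_ratio_cplx a b c d) = cross_ratio_re a b c d"
proof -
  define u w v x where "u = a - b" and "w = b - c" and "v = c - d" and "x = d - a"
  have "Re (cross_ratio_cplx a b c d) = Re (u * v / (w * x))"
    unfolding cross_ratio_cplx_def u_def w_def v_def x_def by (simp add: field_simps)
  also have "\<dots> = (Re (u * v) * Re (w * x) + Im (u * v) * Im (w * x))
      / ((Re (w * x))\<^sup>2 + (Im (w * x))\<^sup>2)"
    by (simp add: Re_divide power2_eq_square)
  also have "\<dots> = (inner u w * inner v x - inner u v * inner w x + inner u x * inner v w)
      / (inner w w * inner x x)"
    by (simp add: inner_complex_def algebra_simps power2_eq_square)
  also have "\<dots> = cross_ratio_re a b c d"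
    unfolding cross_ratio_re_def u_def w_def v_def x_def ..
  finally show ?thesis .
qed

text \<open>Hence cross_ratio is well defined: any isometric identification of a plane with the
  complex plane under which the cross-ratio is real determines its value.\<close>

lemma cross_ratio_eqI:
  fixes A B C D :: "'a::euclidean_space"
  assumes iso: "\<And>z w. dist (\<phi> z) (\<phi> w) = dist z w"
    and pts: "\<phi> z1 = A" "\<phi> z2 = B" "\<phi> z3 = C" "\<phi> z4 = D"
    and q: "cross_ratio_cplx z1 z2 z3 z4 = of_real q"
  shows "cross_ratio A B C D = q"
  unfolding cross_ratio_def
proof (rule the_equality)
  show "\<exists>\<phi> z1 z2 z3 z4. (\<forall>z w. dist (\<phi> z) (\<phi> w) = dist z w) \<and>
      \<phi> z1 = A \<and> \<phi> z2 = B \<and> \<phi> z3 = C \<and> \<phi> z4 = D \<and>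
      (z1 - z2) * inverse (z2 - z3) * (z3 - z4) * inverse (z4 - z1) = complex_of_real q"
    using iso pts q unfolding cross_ratio_cplx_def by blast
next
  (* Any admissible value equals the isometry invariant cross_ratio_re. *)
  have admissible_value: "q' = cross_ratio_re A B C D"
    if "\<And>z w. dist (\<psi> z) (\<psi> w) = dist z w" "\<psi> w1 = A" "\<psi> w2 = B" "\<psi> w3 = C" "\<psi> w4 = D"
      "cross_ratio_cplx w1 w2 w3 w4 = of_real q'" for \<psi> :: "complex \<Rightarrow> 'a" and w1 w2 w3 w4 q'
  proof -
    have "q' = Re (cross_ratio_cplx w1 w2 w3 w4)" using that(6) by simp
    also have "\<dots> = cross_ratio_re (\<psi> w1) (\<psi> w2) (\<psi> w3) (\<psi> w4)"
      by (simp add: Re_cross_ratio_cplx cross_ratio_re_isometry that(1))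
    finally show ?thesis using that(2-5) by simp
  qed
  fix q'
  assume "\<exists>\<psi> w1 w2 w3 w4. (\<forall>z w. dist (\<psi> z) (\<psi> w :: 'a) = dist z w) \<and>
      \<psi> w1 = A \<and> \<psi> w2 = B \<and> \<psi> w3 = C \<and> \<psi> w4 = D \<and>
      (w1 - w2) * inverse (w2 - w3) * (w3 - w4) * inverse (w4 - w1) = complex_of_real q'"
  then have "q' = cross_ratio_re A B C D" unfolding cross_ratio_cplx_def[symmetric] using admissible_value by blast
  moreover have "q = cross_ratio_re A B C D" using admissible_value[OF iso pts q] .
  ultimately show "q' = q" by simp
qed

section \<open>Isometric embeddings of the complex plane\<close>

definition isometric_embedding :: "('b::real_inner \<Rightarrow> 'a::real_inner) \<Rightarrow> bool" where
  "isometric_embedding h \<longleftrightarrow> linear h \<and> (\<forall>x y. inner (h x) (h y) = inner x y)"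

lemma isometric_embedding_norm: "isometric_embedding h \<Longrightarrow> norm (h x) = norm x"
  unfolding isometric_embedding_def by (simp add: norm_eq_sqrt_inner)

lemma isometric_embedding_dist:
  assumes "isometric_embedding h"
  shows "dist (a + h x) (a + h y) = dist x y"
proof -
  have "h x - h y = h (x - y)" using assms unfolding isometric_embedding_def by (simp add: linear_diff)
  then show ?thesis using isometric_embedding_norm[OF assms, of "x - y"] by (simp add: dist_norm)
qed

lemma isometric_embedding_inj: "isometric_embedding h \<Longrightarrow> inj h"
  by (rule injI) (metis isometric_embedding_dist[of h 0] add_0 dist_eq_0_iff)

lemma affine_hull_embedded:
  fixes h :: "'b::euclidean_space \<Rightarrow> 'a::euclidean_space"
  assumes "linear h"
  shows "affine hull ((\<lambda>x. a + h x) ` S) = (\<lambda>x. a + h x) ` (affine hull S)"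
proof -
  have "affine hull ((\<lambda>x. a + h x) ` S) = affine hull ((\<lambda>x. a + x) ` h ` S)"
    by (simp add: image_image)
  also have "\<dots> = (\<lambda>x. a + x) ` h ` (affine hull S)"
    unfolding affine_hull_translation affine_hull_linear_image[symmetric,
        OF assms[unfolded linear_conv_bounded_linear]] ..
  finally show ?thesis by (simp add: image_image)
qed

lemma aff_dim_embedded:
  fixes h :: "'b::euclidean_space \<Rightarrow> 'a::euclidean_space"
  assumes "linear h" and "inj h"
  shows "aff_dim ((\<lambda>x. a + h x) ` S) = aff_dim S"
proof -
  have "(\<lambda>x. a + h x) ` S = (+) a ` h ` S" by (simp add: image_image)
  then show ?thesis using aff_dim_translation_eq aff_dim_injective_linear_image assms by metis
qed

lemma nondeg_planar_quad_embedded: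
  fixes h :: "'b::euclidean_space \<Rightarrow> 'a::euclidean_space"
  assumes "linear h" and "inj h"
  shows "nondeg_planar_quad (a + h z0) (a + h z1) (a + h z2) (a + h z3)
    \<longleftrightarrow> nondeg_planar_quad z0 z1 z2 z3"
proof -
  define \<phi> where "\<phi> x = a + h x" for x
  have inj: "inj \<phi>" using assms(2) unfolding \<phi>_def inj_def by simp
  have aff: "aff_dim (\<phi> ` S) = aff_dim S" for S
    unfolding \<phi>_def using aff_dim_embedded[OF assms] .
  have col: "collinear {\<phi> x, \<phi> y, \<phi> z} \<longleftrightarrow> collinear {x, y, z}" for x y z
    unfolding collinear_aff_dim using aff[of "{x, y, z}"] by simp
  have hull: "affine hull {\<phi> x, \<phi> y} = \<phi> ` (affine hull {x, y})" for x y
    using affine_hull_embedded[OF assms(1), of a "{x, y}"] unfolding \<phi>_def by simp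
  have diag: "(\<exists>P. P \<in> affine hull {\<phi> z0, \<phi> z2} \<and> P \<in> affine hull {\<phi> z1, \<phi> z3}
        \<and> P \<notin> {\<phi> z0, \<phi> z1, \<phi> z2, \<phi> z3})
      \<longleftrightarrow> (\<exists>P. P \<in> affine hull {z0, z2} \<and> P \<in> affine hull {z1, z3} \<and> P \<notin> {z0, z1, z2, z3})"
    unfolding hull using inj by (auto simp: inj_image_mem_iff inj_eq)
  show ?thesis
    unfolding nondeg_planar_quad_def \<phi>_def[symmetric] col diag
    using aff[of "{z0, z1, z2, z3}"] inj by (simp add: inj_eq)
qed

lemma concircular_embedded:
  fixes h :: "'b::euclidean_space \<Rightarrow> 'a::euclidean_space"
  assumes iso: "isometric_embedding h"
  shows "concircular (a + h z0) (a + h z1) (a + h z2) (a + h z3) \<longleftrightarrow> concircular z0 z1 z2 z3"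
proof -
  define \<phi> where "\<phi> x = a + h x" for x
  have lin: "linear h" using iso unfolding isometric_embedding_def by simp
  have pts: "{\<phi> z0, \<phi> z1, \<phi> z2, \<phi> z3} = \<phi> ` {z0, z1, z2, z3}" by simp
  have aff: "aff_dim (\<phi> ` S) = aff_dim S" for S
    unfolding \<phi>_def using aff_dim_embedded[OF lin isometric_embedding_inj[OF iso]] .
  have hull: "affine hull (\<phi> ` S) = \<phi> ` (affine hull S)" for S
    unfolding \<phi>_def using affine_hull_embedded[OF lin] .
  have dist: "dist (\<phi> x) (\<phi> y) = dist x y" for x y
    unfolding \<phi>_def using isometric_embedding_dist[OF iso] .
  show ?thesis
    unfolding concircular_def \<phi>_def[symmetric] pts hull aff by (auto simp: dist)
qed

lemma parallel_vec_linear_image: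
  assumes "linear h" and "inj h"
  shows "parallel_vec (h x) (h y) \<longleftrightarrow> parallel_vec x y"
proof -
  have "h u = c *\<^sub>R h v \<longleftrightarrow> u = c *\<^sub>R v" for u v c
    using assms by (metis linear_scale inj_eq)
  then show ?thesis unfolding parallel_vec_def by simp
qed

lemma dual_quad_embedded:
  assumes "linear h" and "inj h"
  shows "dual_quad (a + h z0) (a + h z1) (a + h z2) (a + h z3) (g + h w0) (g + h w1) (g + h w2) (g + h w3)
    \<longleftrightarrow> dual_quad z0 z1 z2 z3 w0 w1 w2 w3"
proof -
  have "(p + h x) - (p + h y) = h (x - y)" for p x y using assms(1) by (simp add: linear_diff)
  then show ?thesis unfolding dual_quad_def by (simp add: parallel_vec_linear_image[OF assms])
qed

lemma dual_edge_embedded: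
  assumes "isometric_embedding h"
  shows "dual_edge r (a + h x) (a + h y) = h (dual_edge r x y)"
proof -
  have lin: "linear h" using assms unfolding isometric_embedding_def by simp
  then have "(a + h y) - (a + h x) = h (y - x)" by (simp add: linear_diff)
  then show ?thesis unfolding dual_edge_def
    using isometric_embedding_norm[OF assms] by (simp add: linear_scale[OF lin])
qed

lemma cross_ratio_embedded:
  fixes h :: "complex \<Rightarrow> 'a::euclidean_space"
  assumes "isometric_embedding h" and "cross_ratio_cplx z0 z1 z2 z3 = of_real q"
  shows "cross_ratio (a + h z0) (a + h z1) (a + h z2) (a + h z3) = q"
  by (rule cross_ratio_eqI[where \<phi> = "\<lambda>z. a + h z"]) (use assms isometric_embedding_dist in auto)

lemma plane_frame:
  fixes A B C :: "'a::euclidean_space"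
  assumes nc: "\<not> collinear {A, B, C}"
  obtains h :: "complex \<Rightarrow> 'a" and b c where "isometric_embedding h" "B = A + h b" "C = A + h c"
proof -
  have AB: "A \<noteq> B" using nc by (auto simp: collinear_2)
  (* Gram-Schmidt applied to B - A and C - A. *)
  define e1 where "e1 = (1 / norm (B - A)) *\<^sub>R (B - A)"
  define w where "w = (C - A) - inner (C - A) e1 *\<^sub>R e1"
  have "norm e1 = 1" unfolding e1_def using AB by simp
  then have ne1: "inner e1 e1 = 1" by (simp add: norm_eq_1)
  have iw: "inner e1 w = 0" unfolding w_def using ne1 by (simp add: inner_diff_right inner_commute)
  have w0: "w \<noteq> 0"
  proof
    assume "w = 0"
    then have "C - A = inner (C - A) e1 *\<^sub>R e1" unfolding w_def by simp
    also have "\<dots> = (inner (C - A) e1 / norm (B - A)) *\<^sub>R (B - A)" unfolding e1_def by simp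
    finally have "C = A + (inner (C - A) e1 / norm (B - A)) *\<^sub>R (B - A)"
      by (metis add.commute diff_add_cancel)
    then have "collinear {C, A, B}" by (rule collinear_on_line)
    then show False using nc by (simp add: insert_commute)
  qed
  define e2 where "e2 = (1 / norm w) *\<^sub>R w"
  have "norm e2 = 1" unfolding e2_def using w0 by simp
  then have ne2: "inner e2 e2 = 1" by (simp add: norm_eq_1)
  have i12: "inner e1 e2 = 0" unfolding e2_def using iw by simp
  define h where "h z = Re z *\<^sub>R e1 + Im z *\<^sub>R e2" for z
  have "linear h" unfolding h_def by (rule linearI) (simp_all add: algebra_simps scaleR_add_left)
  moreover have "inner (h x) (h y) = inner x y" for x y
    unfolding h_def inner_complex_def using ne1 ne2 i12
    by (simp add: inner_add_left inner_add_right inner_commute algebra_simps)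
  ultimately have "isometric_embedding h" unfolding isometric_embedding_def by blast
  moreover have "B = A + h (Complex (norm (B - A)) 0)" unfolding h_def e1_def using AB by simp
  moreover have "C = A + h (Complex (inner (C - A) e1) (norm w))"
    unfolding h_def e2_def using w0 by (simp add: w_def)
  ultimately show ?thesis by (rule that)
qed

lemma planar_quad_coordinates:
  fixes A B C D :: "'a::euclidean_space"
  assumes ad: "aff_dim {A, B, C, D} \<le> 2" and nc: "\<not> collinear {A, B, C}"
  obtains h :: "complex \<Rightarrow> 'a" and b c d
  where "isometric_embedding h" "B = A + h b" "C = A + h c" "D = A + h d"
proof -
  obtain h :: "complex \<Rightarrow> 'a" and b c where iso: "isometric_embedding h"
    and hb: "B = A + h b" and hc: "C = A + h c"
    using plane_frame[OF nc] .
  have lin: "linear h" using iso unfolding isometric_embedding_def by simp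
  (* D lies in the plane of A, B, C since the affine dimension is 2 \<dots> *)
  have "A \<noteq> B" "A \<noteq> C" "B \<noteq> C" using nc by (auto simp: collinear_2 insert_commute)
  then have "card {A, B, C} = 3" by simp
  moreover have "\<not> affine_dependent {A, B, C}" using nc collinear_3_eq_affine_dependent by blast
  ultimately have "aff_dim {A, B, C} = 2" using aff_dim_affine_independent by fastforce
  then have "D \<in> affine hull {A, B, C}"
    using ad aff_dim_insert[of D "{A, B, C}"] by (auto simp: insert_commute split: if_splits)
  (* \<dots> which is the image of the complex plane under z \<mapsto> A + h z. *)
  also have "affine hull {A, B, C} = (\<lambda>z. A + h z) ` (affine hull {0, b, c})"
    using affine_hull_embedded[OF lin, of A "{0, b, c}"] unfolding hb hc
    by (simp add: linear_0[OF lin])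
  finally obtain d where "D = A + h d" by blast
  then show ?thesis using that iso hb hc by blast
qed

lemma concircular_quad_coordinates:
  fixes A B C D :: "'a::euclidean_space"
  assumes nd: "nondeg_planar_quad A B C D" and cc: "concircular A B C D"
  obtains h :: "complex \<Rightarrow> 'a" and b c d
  where "isometric_embedding h" "B = A + h b" "C = A + h c" "D = A + h d"
    "nondeg_planar_quad 0 b c d" "cross_ratio_cplx 0 b c d = of_real (cross_ratio A B C D)"
proof -
  from nd have "aff_dim {A, B, C, D} \<le> 2" "\<not> collinear {A, B, C}"
    unfolding nondeg_planar_quad_def by simp_all
  then obtain h :: "complex \<Rightarrow> 'a" and b c d where iso: "isometric_embedding h"
    and pts: "B = A + h b" "C = A + h c" "D = A + h d"
    by (rule planar_quad_coordinates)
  have lin: "linear h" using iso unfolding isometric_embedding_def by simp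
  have A: "A = A + h 0" by (simp add: linear_0[OF lin])
  have nd': "nondeg_planar_quad 0 b c d"
    using nd nondeg_planar_quad_embedded[OF lin isometric_embedding_inj[OF iso], of A 0 b c d]
    unfolding pts by (simp flip: A)
  have "concircular 0 b c d"
    using cc concircular_embedded[OF iso, of A 0 b c d] unfolding pts by (simp flip: A)
  moreover have "distinct [0, b, c, d]" using nd' unfolding nondeg_planar_quad_def by simp
  ultimately have "cross_ratio_cplx 0 b c d = of_real (Re (cross_ratio_cplx 0 b c d))"
    by (rule concircular_cross_ratio_cplx_real)
  moreover have "cross_ratio A B C D = Re (cross_ratio_cplx 0 b c d)"
    using cross_ratio_embedded[OF iso calculation, of A] unfolding pts by (simp flip: A)
  ultimately show ?thesis using that iso pts nd' by simp
qed

lemma dual_quad_in_plane: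
  fixes A G0 G1 G2 G3 :: "'a::euclidean_space" and h :: "complex \<Rightarrow> 'a"
  assumes iso: "isometric_embedding h" and ds: "distinct [0, b, c, d]"
    and du: "dual_quad A (A + h b) (A + h c) (A + h d) G0 G1 G2 G3"
  obtains g1 g2 g3 where "G1 = G0 + h g1" "G2 = G0 + h g2" "G3 = G0 + h g3"
proof -
  have lin: "linear h" using iso unfolding isometric_embedding_def by simp
  have "h x \<noteq> 0" if "x \<noteq> 0" for x using isometric_embedding_norm[OF iso, of x] that by auto
  then have nz: "h b \<noteq> 0" "h (c - b) \<noteq> 0" "h (- d) \<noteq> 0" using ds by auto
  have in_plane: "\<exists>x. X = h x" if "parallel_vec X (h y)" "h y \<noteq> 0" for X y
    using parallel_vec_coeff[OF that] linear_scale[OF lin] by metis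
  have "(A + h b) - A = h b" "(A + h c) - (A + h b) = h (c - b)" "A - (A + h d) = h (- d)"
    by (simp_all add: linear_diff[OF lin] linear_neg[OF lin])
  then obtain x1 x2 x4 where "G1 - G0 = h x1" "G2 - G1 = h x2" "G0 - G3 = h x4"
    using du in_plane nz unfolding dual_quad_def by metis
  then have "G1 = G0 + h x1" "G2 = G0 + h (x1 + x2)" "G3 = G0 + h (- x4)"
    by (simp_all add: linear_add[OF lin] linear_neg[OF lin] algebra_simps)
  then show ?thesis by (rule that)
qed

section \<open>Circular quadrilaterals and their duals\<close>

lemma dual_quad_invariants:
  fixes A B C D G0 G1 G2 G3 :: "'a::euclidean_space"
  assumes nd: "nondeg_planar_quad A B C D" and cc: "concircular A B C D"
    and du: "dual_quad A B C D G0 G1 G2 G3" and G01: "G0 \<noteq> G1"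
  shows "inner (G1 - G0) (B - A) = inner (G2 - G3) (C - D)"
    and "inner (G2 - G1) (C - B) = inner (G3 - G0) (D - A)"
    and "cross_ratio A B C D = inner (G1 - G0) (B - A) / inner (G3 - G0) (D - A)"
proof -
  obtain h :: "complex \<Rightarrow> 'a" and b c d where iso: "isometric_embedding h"
    and pts: "B = A + h b" "C = A + h c" "D = A + h d"
    and nd': "nondeg_planar_quad 0 b c d" and cr: "cross_ratio_cplx 0 b c d = of_real (cross_ratio A B C D)"
    using concircular_quad_coordinates[OF nd cc] by metis
  have lin: "linear h" using iso unfolding isometric_embedding_def by simp
  have ds: "distinct [0, b, c, d]" using nd' unfolding nondeg_planar_quad_def by simp
  obtain g1 g2 g3 where G: "G1 = G0 + h g1" "G2 = G0 + h g2" "G3 = G0 + h g3"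
    using dual_quad_in_plane[OF iso ds du[unfolded pts]] .
  have base: "A + h 0 = A" "G0 + h 0 = G0" by (simp_all add: linear_0[OF lin])
  have du': "dual_quad 0 b c d 0 g1 g2 g3"
    using du dual_quad_embedded[OF lin isometric_embedding_inj[OF iso], of A 0 b c d G0 0 g1 g2 g3]
    unfolding pts G base by simp
  have g1: "0 \<noteq> g1" using G01 G base by auto
  note invariants = dual_quad_complex_invariants[OF nd' cr du' g1]
  have "inner (h x) (h y) = inner x y" for x y using iso unfolding isometric_embedding_def by simp
  moreover have "(p + h x) - (p + h y) = h (x - y)" "(p + h x) - p = h x" for p x y
    by (simp_all add: linear_diff[OF lin])
  ultimately show "inner (G1 - G0) (B - A) = inner (G2 - G3) (C - D)"
    and "inner (G2 - G1) (C - B) = inner (G3 - G0) (D - A)"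
    and "cross_ratio A B C D = inner (G1 - G0) (B - A) / inner (G3 - G0) (D - A)"
    using invariants unfolding pts G by simp_all
qed

lemma dual_quad_construction:
  fixes A B C D G0 :: "'a::euclidean_space" and \<alpha> \<beta> :: real
  assumes nd: "nondeg_planar_quad A B C D" and cc: "concircular A B C D"
    and cr: "cross_ratio A B C D = \<alpha> / \<beta>"
  defines "G1 \<equiv> G0 + dual_edge \<alpha> A B" and "G2 \<equiv> G0 + dual_edge \<alpha> A B + dual_edge \<beta> B C"
    and "G3 \<equiv> G0 + dual_edge \<beta> A D"
  shows "G2 = G3 + dual_edge \<alpha> D C" and "dual_quad A B C D G0 G1 G2 G3"
    and "nondeg_planar_quad G0 G1 G2 G3"
proof -
  obtain h :: "complex \<Rightarrow> 'a" and b c d where iso: "isometric_embedding h"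
    and pts: "B = A + h b" "C = A + h c" "D = A + h d"
    and nd': "nondeg_planar_quad 0 b c d" and cr': "cross_ratio_cplx 0 b c d = of_real (\<alpha> / \<beta>)"
    using concircular_quad_coordinates[OF nd cc] unfolding cr by metis
  have lin: "linear h" using iso unfolding isometric_embedding_def by simp
  have base: "A + h 0 = A" "G0 + h 0 = G0" by (simp_all add: linear_0[OF lin])
  have edge: "dual_edge r (A + h x) (A + h y) = h (dual_edge r x y)" for r x y
    by (rule dual_edge_embedded[OF iso])
  define z1 z2 z3 where "z1 = dual_edge \<alpha> 0 b" and "z2 = dual_edge \<alpha> 0 b + dual_edge \<beta> b c"
    and "z3 = dual_edge \<beta> 0 d"
  have G: "G1 = G0 + h z1" "G2 = G0 + h z2" "G3 = G0 + h z3"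
    unfolding G1_def G2_def G3_def z1_def z2_def z3_def pts
    using edge edge[of _ 0, unfolded base(1)] by (simp_all add: linear_add[OF lin] add.assoc)
  note constr = dual_quad_complex_construction[OF nd' cr', folded z1_def z2_def z3_def]
  have "h z2 = h z3 + h (dual_edge \<alpha> d c)"
    unfolding constr(1)[folded z1_def z2_def z3_def] linear_add[OF lin, symmetric] ..
  then show "G2 = G3 + dual_edge \<alpha> D C" unfolding G pts edge by (simp add: add.assoc)
  show "dual_quad A B C D G0 G1 G2 G3"
    using constr(2) dual_quad_embedded[OF lin isometric_embedding_inj[OF iso], of A 0 b c d G0 0 z1 z2 z3]
    unfolding pts G base by simp
  show "nondeg_planar_quad G0 G1 G2 G3"
    using dual_quad_complex_nondeg[OF nd' cr', folded z1_def z2_def z3_def]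
      nondeg_planar_quad_embedded[OF lin isometric_embedding_inj[OF iso], of G0 0 z1 z2 z3]
    unfolding G base by simp
qed

section \<open>Discrete integration on the lattice\<close>

lemma shift_commute: "shift (shift u i) j = shift (shift u j) i"
  unfolding shift_def by (cases "i = j") (simp_all add: fun_upd_twist)

lemma shift_apply_other [simp]: "i \<noteq> j \<Longrightarrow> shift u i j = u j"
  unfolding shift_def by simp

lemma shift_apply_same [simp]: "shift u k k = u k + 1"
  unfolding shift_def by simp

lemma fun_upd_shift_same [simp]: "(shift u k)(k := t) = u(k := t)"
  unfolding shift_def by simp

lemma fun_upd_shift_other: "i \<noteq> k \<Longrightarrow> (shift u i)(k := t) = shift (u(k := t)) i"
  unfolding shift_def by (simp add: fun_upd_twist)

lemma fun_upd_succ: "u(k := t + 1) = shift (u(k := t)) k"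
  unfolding shift_def by simp

lemma int_eq_by_increments:
  fixes F G :: "int \<Rightarrow> 'a::ab_group_add"
  assumes base: "F a = G a" and step: "\<And>n. F (n + 1) - F n = G (n + 1) - G n"
  shows "F n = G n"
proof (induct n rule: int_induct[where k = a])
  case base
  then show ?case by (rule assms(1))
next
  case (step1 i)
  then show ?case using step[of i] by (metis diff_add_cancel)
next
  case (step2 i)
  then show ?case using step[of "i - 1"] by (metis diff_add_cancel diff_left_imp_eq)
qed

text \<open>The discrete antiderivative of a function on the integers, normalised to vanish at
  0.\<close>

definition line_sum :: "(int \<Rightarrow> 'a::ab_group_add) \<Rightarrow> int \<Rightarrow> 'a" where
  "line_sum \<phi> n = (if n \<ge> 0 then (\<Sum>k<nat n. \<phi> (int k)) else - (\<Sum>k<nat (- n). \<phi> (- int k - 1)))"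

lemma line_sum_0 [simp]: "line_sum \<phi> 0 = 0"
  unfolding line_sum_def by simp

lemma line_sum_step: "line_sum \<phi> (n + 1) - line_sum \<phi> n = \<phi> n"
proof (cases "n \<ge> 0")
  case True
  then have "nat (n + 1) = Suc (nat n)" by simp
  then show ?thesis using True unfolding line_sum_def by simp
next
  case False
  show ?thesis
  proof (cases "n = -1")
    case True
    then show ?thesis unfolding line_sum_def by simp
  next
    case n: False
    with False have "\<not> n + 1 \<ge> 0" and "nat (- n) = Suc (nat (- (n + 1)))" by simp_all
    moreover have "- int (nat (- (n + 1))) - 1 = n" using \<open>\<not> n + 1 \<ge> 0\<close> by simp
    ultimately show ?thesis using False unfolding line_sum_def by (simp add: algebra_simps)
  qed
qed

lemma closed_form_strip:
  fixes \<omega> :: "('m \<Rightarrow> int) \<Rightarrow> 'm \<Rightarrow> 'a::ab_group_add"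
  assumes closed: "\<And>u i j. i \<noteq> j \<Longrightarrow> \<omega> u i + \<omega> (shift u i) j = \<omega> u j + \<omega> (shift u j) i"
    and ik: "i \<noteq> k"
  shows "line_sum (\<lambda>t. \<omega> (shift (u(k := t)) i) k) n - line_sum (\<lambda>t. \<omega> (u(k := t)) k) n
    = \<omega> (u(k := n)) i - \<omega> (u(k := 0)) i"
proof (rule int_eq_by_increments[where a = 0 and n = n and
      F = "\<lambda>n. line_sum (\<lambda>t. \<omega> (shift (u(k := t)) i) k) n - line_sum (\<lambda>t. \<omega> (u(k := t)) k) n"
      and G = "\<lambda>n. \<omega> (u(k := n)) i - \<omega> (u(k := 0)) i"])
  fix n
  define v where "v = u(k := n)"
  have "\<omega> v i + \<omega> (shift v i) k = \<omega> v k + \<omega> (shift v k) i" using closed ik by blast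
  then have "\<omega> (shift v i) k - \<omega> v k = \<omega> (shift v k) i - \<omega> v i" by (simp add: algebra_simps)
  then show "(line_sum (\<lambda>t. \<omega> (shift (u(k := t)) i) k) (n + 1) - line_sum (\<lambda>t. \<omega> (u(k := t)) k) (n + 1))
      - (line_sum (\<lambda>t. \<omega> (shift (u(k := t)) i) k) n - line_sum (\<lambda>t. \<omega> (u(k := t)) k) n)
    = (\<omega> (u(k := n + 1)) i - \<omega> (u(k := 0)) i) - (\<omega> (u(k := n)) i - \<omega> (u(k := 0)) i)"
    using line_sum_step[of "\<lambda>t. \<omega> (shift (u(k := t)) i) k" n]
      line_sum_step[of "\<lambda>t. \<omega> (u(k := t)) k" n]
    unfolding fun_upd_succ v_def by (simp add: algebra_simps)
qed simp

text \<open>Every closed discrete 1-form on Z^m is exact; the potential is built coordinate by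
  coordinate.\<close>

lemma closed_form_exact:
  fixes \<omega> :: "('m::finite \<Rightarrow> int) \<Rightarrow> 'm \<Rightarrow> 'a::ab_group_add"
  assumes closed: "\<And>u i j. i \<noteq> j \<Longrightarrow> \<omega> u i + \<omega> (shift u i) j = \<omega> u j + \<omega> (shift u j) i"
  obtains g where "\<And>u i. g (shift u i) - g u = \<omega> u i"
proof -
  have "finite S \<Longrightarrow> \<exists>g. \<forall>u. \<forall>i\<in>S. g (shift u i) - g u = \<omega> u i" for S :: "'m set"
  proof (induct S rule: finite_induct)
    case empty
    then show ?case by blast
  next
    case (insert k S)
    then obtain g where g: "\<And>u i. i \<in> S \<Longrightarrow> g (shift u i) - g u = \<omega> u i" by blast
    (* Integrate along the k-th coordinate line, starting from the hyperplane u k = 0. *)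
    define h where "h u = line_sum (\<lambda>t. \<omega> (u(k := t)) k) (u k)" for u
    define g' where "g' u = g (u(k := 0)) + h u" for u
    have "g' (shift u i) - g' u = \<omega> u i" if i: "i \<in> insert k S" for u i
    proof (cases "i = k")
      case True
      then show ?thesis
        unfolding g'_def h_def using line_sum_step[of "\<lambda>t. \<omega> (u(k := t)) k" "u k"] by simp
    next
      case False
      then have "g' (shift u i) - g' u
          = (g (shift (u(k := 0)) i) - g (u(k := 0))) + (h (shift u i) - h u)"
        unfolding g'_def using fun_upd_shift_other[OF False] by (simp add: algebra_simps)
      also have "\<dots> = \<omega> (u(k := 0)) i + (\<omega> u i - \<omega> (u(k := 0)) i)"
      proof -
        have "h (shift u i) - h u = \<omega> u i - \<omega> (u(k := 0)) i"
          using closed_form_strip[OF closed False, of u "u k"]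
          unfolding h_def fun_upd_shift_other[OF False] shift_apply_other[OF False] fun_upd_triv .
        then show ?thesis using g[of i] i False by simp
      qed
      finally show ?thesis by simp
    qed
    then show ?case by blast
  qed
  from this[of UNIV] show ?thesis using that by auto
qed

lemma shift_invariant_fun_upd:
  fixes \<beta> :: "('m \<Rightarrow> int) \<Rightarrow> 'm \<Rightarrow> 'a::ab_group_add"
  assumes inv: "\<And>u i j. i \<noteq> j \<Longrightarrow> \<beta> (shift u j) i = \<beta> u i" and ik: "i \<noteq> k"
  shows "\<beta> (u(k := t)) i = \<beta> u i"
proof -
  have "\<beta> (u(k := t)) i = \<beta> (u(k := u k)) i"
    by (rule int_eq_by_increments[where a = "u k" and n = t and F = "\<lambda>t. \<beta> (u(k := t)) i"
          and G = "\<lambda>_. \<beta> (u(k := u k)) i"])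
      (use inv ik in \<open>simp_all add: fun_upd_succ\<close>)
  then show ?thesis by simp
qed

lemma labelling_of_shift_invariant:
  fixes \<beta> :: "('m::finite \<Rightarrow> int) \<Rightarrow> 'm \<Rightarrow> 'a::ab_group_add"
  assumes inv: "\<And>u i j. i \<noteq> j \<Longrightarrow> \<beta> (shift u j) i = \<beta> u i"
  obtains \<alpha> where "\<And>u i. \<beta> u i = \<alpha> i (u i)"
proof -
  have invariant_off_S: "finite S \<Longrightarrow> \<forall>u v. (\<forall>k. k \<notin> S \<longrightarrow> u k = v k) \<longrightarrow> i \<notin> S \<longrightarrow> \<beta> u i = \<beta> v i"
    for S :: "'m set" and i
  proof (induct S rule: finite_induct)
    case empty
    then show ?case by (simp add: fun_eq_iff[symmetric])
  next
    case (insert k S)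
    show ?case
    proof (intro allI impI)
      fix u v :: "'m \<Rightarrow> int"
      assume agree: "\<forall>j. j \<notin> insert k S \<longrightarrow> u j = v j" and iS: "i \<notin> insert k S"
      have "i \<noteq> k" using iS by simp
      then have "\<beta> u i = \<beta> (u(k := v k)) i" using shift_invariant_fun_upd[of \<beta>, OF inv] by simp
      also have "\<dots> = \<beta> v i"
      proof -
        have "\<forall>j. j \<notin> S \<longrightarrow> (u(k := v k)) j = v j" using agree by auto
        moreover have "i \<notin> S" using iS by simp
        ultimately show ?thesis using insert(3) by blast
      qed
      finally show "\<beta> u i = \<beta> v i" .
    qed
  qed
  have "\<beta> u i = \<beta> ((\<lambda>_. 0)(i := u i)) i" for u i
    using invariant_off_S[of "UNIV - {i}" i, rule_format, of u "(\<lambda>_. 0)(i := u i)"] by simp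
  then show ?thesis by (rule that[of "\<lambda>i n. \<beta> ((\<lambda>_. 0)(i := n)) i"])
qed

section \<open>Circular nets\<close>

text \<open>A dual net yields an edge labelling realising the cross-ratios: alpha_i(u) = <g(u + e_i)
  - g(u), f(u + e_i) - f(u)>.\<close>

lemma circular_koenigs_net_labelling:
  fixes f :: "('m::finite \<Rightarrow> int) \<Rightarrow> 'a::euclidean_space"
  assumes circ: "circular_net f" and koe: "koenigs_net f"
  shows "\<exists>\<alpha> :: 'm \<Rightarrow> int \<Rightarrow> real. \<forall>u i j. i \<noteq> j \<longrightarrow>
    cross_ratio (f u) (f (shift u i)) (f (shift (shift u i) j)) (f (shift u j)) = \<alpha> i (u i) / \<alpha> j (u j)"
proof -
  from koe obtain g :: "('m \<Rightarrow> int) \<Rightarrow> 'a" where qg: "qnet g" and dual: "\<And>u i j. i \<noteq> j \<Longrightarrow>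
      dual_quad (f u) (f (shift u i)) (f (shift (shift u i) j)) (f (shift u j))
        (g u) (g (shift u i)) (g (shift (shift u i) j)) (g (shift u j))"
    unfolding koenigs_net_def by blast
  from circ have nd: "\<And>u i j. i \<noteq> j \<Longrightarrow>
      nondeg_planar_quad (f u) (f (shift u i)) (f (shift (shift u i) j)) (f (shift u j))"
    and cc: "\<And>u i j. i \<noteq> j \<Longrightarrow> concircular (f u) (f (shift u i)) (f (shift (shift u i) j)) (f (shift u j))"
    unfolding circular_net_def qnet_def by blast+
  define \<beta> where "\<beta> u i = inner (g (shift u i) - g u) (f (shift u i) - f u)" for u i
  have quad: "\<beta> (shift u j) i = \<beta> u i \<and>
      cross_ratio (f u) (f (shift u i)) (f (shift (shift u i) j)) (f (shift u j)) = \<beta> u i / \<beta> u j"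
    if ij: "i \<noteq> j" for u i j
  proof -
    have "g u \<noteq> g (shift u i)" using qg ij unfolding qnet_def nondeg_planar_quad_def by auto
    note invariants = dual_quad_invariants[OF nd[OF ij] cc[OF ij] dual[OF ij] this]
    show ?thesis using invariants(1,3) unfolding \<beta>_def shift_commute[of u j i] by simp
  qed
  have inv: "\<And>u i j. i \<noteq> j \<Longrightarrow> \<beta> (shift u j) i = \<beta> u i" using quad by blast
  obtain \<alpha> where \<alpha>: "\<And>u i. \<beta> u i = \<alpha> i (u i)"
    using labelling_of_shift_invariant[of \<beta>, OF inv] by blast
  show ?thesis by (intro exI[of _ \<alpha>] allI impI) (simp add: quad \<alpha>[symmetric])
qed

text \<open>Conversely, the dual edges prescribed by a labelling integrate to a dual net.\<close>

lemma circular_net_labelling_koenigs: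
  fixes f :: "('m::finite \<Rightarrow> int) \<Rightarrow> 'a::euclidean_space" and \<alpha> :: "'m \<Rightarrow> int \<Rightarrow> real"
  assumes circ: "circular_net f" and lab: "\<And>u i j. i \<noteq> j \<Longrightarrow>
    cross_ratio (f u) (f (shift u i)) (f (shift (shift u i) j)) (f (shift u j)) = \<alpha> i (u i) / \<alpha> j (u j)"
  shows "koenigs_net f"
proof -
  from circ have nd: "\<And>u i j. i \<noteq> j \<Longrightarrow>
      nondeg_planar_quad (f u) (f (shift u i)) (f (shift (shift u i) j)) (f (shift u j))"
    and cc: "\<And>u i j. i \<noteq> j \<Longrightarrow> concircular (f u) (f (shift u i)) (f (shift (shift u i) j)) (f (shift u j))"
    unfolding circular_net_def qnet_def by blast+
  (* The edges of the dual net, prescribed by the labelling, form a closed 1-form on Z^m. *)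
  define \<omega> where "\<omega> u i = dual_edge (\<alpha> i (u i)) (f u) (f (shift u i))" for u i
  have closed: "\<omega> u i + \<omega> (shift u i) j = \<omega> u j + \<omega> (shift u j) i" if ij: "i \<noteq> j" for u i j
    using dual_quad_construction(1)[OF nd[of i j u, OF ij] cc[of i j u, OF ij] lab[of i j u, OF ij], of 0] ij
    unfolding \<omega>_def shift_commute[of u j i] by simp
  obtain g where "\<And>u i. g (shift u i) - g u = \<omega> u i" using closed_form_exact[OF closed] by blast
  then have g: "g (shift u i) = g u + \<omega> u i" for u i by (metis add.commute diff_add_cancel)
  have "dual_quad (f u) (f (shift u i)) (f (shift (shift u i) j)) (f (shift u j))
      (g u) (g (shift u i)) (g (shift (shift u i) j)) (g (shift u j)) \<and>
    nondeg_planar_quad (g u) (g (shift u i)) (g (shift (shift u i) j)) (g (shift u j))"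
    if ij: "i \<noteq> j" for u i j
  proof -
    have G: "g (shift u i) = g u + dual_edge (\<alpha> i (u i)) (f u) (f (shift u i))"
      "g (shift (shift u i) j) = g u + dual_edge (\<alpha> i (u i)) (f u) (f (shift u i))
         + dual_edge (\<alpha> j (u j)) (f (shift u i)) (f (shift (shift u i) j))"
      "g (shift u j) = g u + dual_edge (\<alpha> j (u j)) (f u) (f (shift u j))"
      using ij by (simp_all add: g \<omega>_def)
    show ?thesis
      using dual_quad_construction(2,3)[OF nd[of i j u, OF ij] cc[of i j u, OF ij] lab[of i j u, OF ij]]
      unfolding G by blast
  qed
  then have "qnet g" and "\<forall>u i j. i \<noteq> j \<longrightarrow>
      dual_quad (f u) (f (shift u i)) (f (shift (shift u i) j)) (f (shift u j))
        (g u) (g (shift u i)) (g (shift (shift u i) j)) (g (shift u j))"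
    unfolding qnet_def by blast+
  moreover have "qnet f" using circ unfolding circular_net_def by blast
  ultimately show ?thesis unfolding koenigs_net_def by blast
qed

theorem mainTheorem14:
  fixes f :: "('m::finite \<Rightarrow> int) \<Rightarrow> real ^ 'n"
  assumes "circular_net f"
  shows "isothermic_net f \<longleftrightarrow>
    (\<exists>\<alpha> :: 'm \<Rightarrow> int \<Rightarrow> real. \<forall>u i j. i \<noteq> j \<longrightarrow>
       cross_ratio (f u) (f (shift u i)) (f (shift (shift u i) j)) (f (shift u j))
         = \<alpha> i (u i) / \<alpha> j (u j))"
proof
  assume "isothermic_net f"
  then show "\<exists>\<alpha> :: 'm \<Rightarrow> int \<Rightarrow> real. \<forall>u i j. i \<noteq> j \<longrightarrow>
      cross_ratio (f u) (f (shift u i)) (f (shift (shift u i) j)) (f (shift u j)) = \<alpha> i (u i) / \<alpha> j (u j)"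
    using circular_koenigs_net_labelling[OF assms] unfolding isothermic_net_def by blast
next
  assume "\<exists>\<alpha> :: 'm \<Rightarrow> int \<Rightarrow> real. \<forall>u i j. i \<noteq> j \<longrightarrow>
      cross_ratio (f u) (f (shift u i)) (f (shift (shift u i) j)) (f (shift u j)) = \<alpha> i (u i) / \<alpha> j (u j)"
  then obtain \<alpha> :: "'m \<Rightarrow> int \<Rightarrow> real" where "\<And>u i j. i \<noteq> j \<Longrightarrow>
      cross_ratio (f u) (f (shift u i)) (f (shift (shift u i) j)) (f (shift u j)) = \<alpha> i (u i) / \<alpha> j (u j)"
    by blast
  then have "koenigs_net f" by (rule circular_net_labelling_koenigs[OF assms])
  then show "isothermic_net f" using assms unfolding isothermic_net_def by blast
qed

end
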